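(* Let $H$ be a graph such that $L(H)$ has a $K_t$-immersion. Then for every integer $m\geq 2$, the line graph $L(mH)$ has a $K_{mt}$-immersion.
   Context: Graphs are finite and may have parallel edges but no loops. The line graph $L(H)$ of a graph $H$ is the simple graph whose vertex set is $E(H)$, in which two distinct edges of $H$ are adjacent iff they share at least one endpoint (so parallel edges of $H$ are adjacent in $L(H)$). For $m\geq 2$, $mH$ denotes the graph obtained from $H$ by replacing each edge $e$ by $m$ parallel copies of $e$. A graph $G$ has a $K_t$-immersion if there is an injective map $\phi$ from the vertex set of $K_t$ to $V(G)$ and, for each pair $u\neq v$ of vertices of $K_t$, a path in $G$ joining $\phi(u)$ and $\phi(v)$, such that these $\binom{t}{2}$ paths are pairwise edge-disjoint (equivalently, $K_t$ can be obtained from a subgraph of $G$ by repeatedly splitting off pairs of adjacent edges and deleting isolated vertices). *)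

theory Defs
  imports Main
begin

text \<open>A finite multigraph without loops: vertex set V, edge set E (edges are abstract
objects, so parallel edges are allowed), and an endpoint map giving each edge a
2-element set of endpoints in V.\<close>
definition multigraph :: "'v set \<Rightarrow> 'e set \<Rightarrow> ('e \<Rightarrow> 'v set) \<Rightarrow> bool" where
  "multigraph V E ends \<longleftrightarrow> finite V \<and> finite E \<and>
     (\<forall>e\<in>E. card (ends e) = 2 \<and> ends e \<subseteq> V)"

definition line_adj :: "'e set \<Rightarrow> ('e \<Rightarrow> 'v set) \<Rightarrow> 'e \<Rightarrow> 'e \<Rightarrow> bool" where
  "line_adj E ends e f \<longleftrightarrow> e \<in> E \<and> f \<in> E \<and> e \<noteq> f \<and> ends e \<inter> ends f \<noteq> {}"

text \<open>mH: each edge e replaced by m parallel copies (e,0),...,(e,m-1).\<close>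
definition mult_edges :: "nat \<Rightarrow> 'e set \<Rightarrow> ('e \<times> nat) set" where
  "mult_edges m E = E \<times> {..<m}"

definition mult_ends :: "('e \<Rightarrow> 'v set) \<Rightarrow> ('e \<times> nat) \<Rightarrow> 'v set" where
  "mult_ends ends p = ends (fst p)"

fun path_edges :: "'a list \<Rightarrow> 'a set set" where
  "path_edges (x # y # xs) = insert {x, y} (path_edges (y # xs))"
| "path_edges _ = {}"

definition is_path :: "'a set \<Rightarrow> ('a \<Rightarrow> 'a \<Rightarrow> bool) \<Rightarrow> 'a list \<Rightarrow> 'a \<Rightarrow> 'a \<Rightarrow> bool" where
  "is_path V Adj xs a b \<longleftrightarrow> xs \<noteq> [] \<and> hd xs = a \<and> last xs = b \<and> distinct xs \<and>
     set xs \<subseteq> V \<and> (\<forall>i. Suc i < length xs \<longrightarrow> Adj (xs ! i) (xs ! Suc i))"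

definition has_K_immersion :: "'a set \<Rightarrow> ('a \<Rightarrow> 'a \<Rightarrow> bool) \<Rightarrow> nat \<Rightarrow> bool" where
  "has_K_immersion V Adj t \<longleftrightarrow>
     (\<exists>\<phi> P. inj_on \<phi> {..<t} \<and> \<phi> ` {..<t} \<subseteq> V \<and>
        (\<forall>u v. u < v \<and> v < t \<longrightarrow> is_path V Adj (P u v) (\<phi> u) (\<phi> v)) \<and>
        (\<forall>u v u' v'. u < v \<and> v < t \<and> u' < v' \<and> v' < t \<and> (u, v) \<noteq> (u', v') \<longrightarrow>
            path_edges (P u v) \<inter> path_edges (P u' v') = {}))"

end

theory Submission
  imports Defs "HOL-Number_Theory.Cong"
begin

text \<open>Vertex \<open>w\<close> of \<open>K\<^sub>m\<^sub>t\<close> is sent to copy \<open>w mod m\<close> of the branch edge \<open>\<phi> (w div m)\<close>.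
Two vertices in the same block are joined directly: parallel copies are adjacent in \<open>L(mH)\<close>.
For two blocks \<open>u < v\<close>, every pair of copies \<open>(i, j)\<close> is joined by a lift of the path \<open>P u v\<close>
to \<open>L(mH)\<close> that starts in copy \<open>i\<close>, ends in copy \<open>j\<close>, and whose copy labels on any single
edge of \<open>P u v\<close> determine \<open>(i, j)\<close>. Hence the \<open>m\<^sup>2\<close> lifts of \<open>P u v\<close> are edge-disjoint, and lifts of
different paths are edge-disjoint because their projections to \<open>L(H)\<close> are.\<close>

definition is_K_immersion ::
    "'a set \<Rightarrow> ('a \<Rightarrow> 'a \<Rightarrow> bool) \<Rightarrow> nat \<Rightarrow> (nat \<Rightarrow> 'a) \<Rightarrow> (nat \<Rightarrow> nat \<Rightarrow> 'a list) \<Rightarrow> bool" where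
  "is_K_immersion V Adj t \<phi> P \<longleftrightarrow> inj_on \<phi> {..<t} \<and> \<phi> ` {..<t} \<subseteq> V \<and>
     (\<forall>u v. u < v \<and> v < t \<longrightarrow> is_path V Adj (P u v) (\<phi> u) (\<phi> v)) \<and>
     (\<forall>u v u' v'. u < v \<and> v < t \<and> u' < v' \<and> v' < t \<and> (u, v) \<noteq> (u', v') \<longrightarrow>
        path_edges (P u v) \<inter> path_edges (P u' v') = {})"

lemma has_K_immersion_iff: "has_K_immersion V Adj t \<longleftrightarrow> (\<exists>\<phi> P. is_K_immersion V Adj t \<phi> P)"
  by (simp add: has_K_immersion_def is_K_immersion_def)

lemma path_edges_conv_nth: "path_edges xs = {{xs ! l, xs ! Suc l} | l. Suc l < length xs}"
proof (induction xs rule: path_edges.induct)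
  case (1 x y xs)
  have "{{(x#y#xs) ! l, (x#y#xs) ! Suc l} | l. Suc l < length (x#y#xs)}
        = insert {x, y} {{(y#xs) ! l, (y#xs) ! Suc l} | l. Suc l < length (y#xs)}"
  proof (intro equalityI subsetI)
    fix e assume "e \<in> {{(x#y#xs) ! l, (x#y#xs) ! Suc l} | l. Suc l < length (x#y#xs)}"
    then show "e \<in> insert {x, y} {{(y#xs) ! l, (y#xs) ! Suc l} | l. Suc l < length (y#xs)}"
      by (auto simp: nth_Cons split: nat.splits)
  next
    fix e assume "e \<in> insert {x, y} {{(y#xs) ! l, (y#xs) ! Suc l} | l. Suc l < length (y#xs)}"
    then show "e \<in> {{(x#y#xs) ! l, (x#y#xs) ! Suc l} | l. Suc l < length (x#y#xs)}"
    proof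
      assume "e = {x, y}"
      then show ?thesis by force
    next
      assume "e \<in> {{(y#xs) ! l, (y#xs) ! Suc l} | l. Suc l < length (y#xs)}"
      then obtain l where "Suc l < length (y#xs)" "e = {(y#xs) ! l, (y#xs) ! Suc l}" by blast
      then show ?thesis by (intro CollectI exI[of _ "Suc l"]) simp
    qed
  qed
  then show ?case using "1.IH" by simp
qed auto

lemma card_path_edge: "distinct xs \<Longrightarrow> e \<in> path_edges xs \<Longrightarrow> card e = 2"
  by (auto simp: path_edges_conv_nth nth_eq_iff_index_eq)

lemma path_edge_index_unique:
  assumes "distinct xs" "Suc l < length xs" "Suc l' < length xs"
    and "{xs ! l, xs ! Suc l} = {xs ! l', xs ! Suc l'}"
  shows "l = l'"
  using assms by (auto simp: doubleton_eq_iff nth_eq_iff_index_eq)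

lemma is_path_pair: "a \<noteq> b \<Longrightarrow> a \<in> V \<Longrightarrow> b \<in> V \<Longrightarrow> Adj a b \<Longrightarrow> is_path V Adj [a, b] a b"
  by (simp add: is_path_def less_Suc_eq)

lemma add_mod_left_cancel_nat: "(i + j) mod m = (i + j') mod m \<Longrightarrow> j < m \<Longrightarrow> j' < m \<Longrightarrow> j = (j' :: nat)"
  by (metis cong_def cong_add_lcancel_nat cong_less_modulus_unique_nat)

text \<open>Copy labels along a path with \<open>k\<close> edges from copy \<open>i\<close> to copy \<open>j\<close>: they alternate
\<open>i, j, i, \<dots>\<close>, which ends in \<open>j\<close> only for odd \<open>k\<close>; for even \<open>k\<close> the label \<open>(i + j) mod m\<close> is
inserted at position 1 to fix the parity without losing the recoverability of \<open>(i, j)\<close>.\<close>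
definition copy_label :: "nat \<Rightarrow> nat \<Rightarrow> nat \<Rightarrow> nat \<Rightarrow> nat \<Rightarrow> nat" where
  "copy_label m k i j l =
     (if odd k then (if even l then i else j)
      else if l = 0 then i else if l = 1 then (i + j) mod m else if even l then j else i)"

lemma copy_label_less: "i < m \<Longrightarrow> j < m \<Longrightarrow> copy_label m k i j l < m"
  by (simp add: copy_label_def)

lemma copy_label_0 [simp]: "copy_label m k i j 0 = i"
  by (simp add: copy_label_def)

lemma copy_label_last: "0 < k \<Longrightarrow> copy_label m k i j k = j"
  by (simp add: copy_label_def)

lemma copy_labels_determine_ends:
  assumes "i < m" "j < m" "i' < m" "j' < m" "Suc l \<le> k"
    and "copy_label m k i j l = copy_label m k i' j' l"
    and "copy_label m k i j (Suc l) = copy_label m k i' j' (Suc l)"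
  shows "i = i' \<and> j = j'"
proof (cases "odd k \<or> 2 \<le> l")
  case True
  then show ?thesis using assms by (auto simp: copy_label_def split: if_splits)
next
  case False
  then consider "even k" "l = 0" | "even k" "l = 1" by force
  then show ?thesis
  proof cases
    case 1
    then have "i = i'" "(i + j) mod m = (i + j') mod m" using assms by (simp_all add: copy_label_def)
    then show ?thesis using add_mod_left_cancel_nat assms by blast
  next
    case 2
    then have "j = j'" "(j + i) mod m = (j + i') mod m" using assms by (simp_all add: copy_label_def add.commute)
    then show ?thesis using add_mod_left_cancel_nat assms by blast
  qed
qed

definition lift_copies :: "nat \<Rightarrow> 'e list \<Rightarrow> nat \<Rightarrow> nat \<Rightarrow> ('e \<times> nat) list" where
  "lift_copies m xs i j = map (\<lambda>l. (xs ! l, copy_label m (length xs - 1) i j l)) [0..<length xs]"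

lemma length_lift_copies [simp]: "length (lift_copies m xs i j) = length xs"
  by (simp add: lift_copies_def)

lemma nth_lift_copies:
  "l < length xs \<Longrightarrow> lift_copies m xs i j ! l = (xs ! l, copy_label m (length xs - 1) i j l)"
  by (simp add: lift_copies_def)

lemma path_edges_lift_copies: "path_edges (lift_copies m xs i j) =
    {{(xs ! l, copy_label m (length xs - 1) i j l), (xs ! Suc l, copy_label m (length xs - 1) i j (Suc l))}
     | l. Suc l < length xs}"
proof -
  have "{lift_copies m xs i j ! l, lift_copies m xs i j ! Suc l} =
      {(xs ! l, copy_label m (length xs - 1) i j l), (xs ! Suc l, copy_label m (length xs - 1) i j (Suc l))}"
    if "Suc l < length xs" for l
    using that by (simp add: nth_lift_copies)
  then show ?thesis unfolding path_edges_conv_nth length_lift_copies by blast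
qed

lemma fst_lift_copies_edge: "e \<in> path_edges (lift_copies m xs i j) \<Longrightarrow> fst ` e \<in> path_edges xs"
  unfolding path_edges_lift_copies by (auto simp: path_edges_conv_nth)

lemma lift_copies_edge_determines_ends:
  assumes "distinct xs" "i < m" "j < m" "i' < m" "j' < m"
    and "e \<in> path_edges (lift_copies m xs i j)" "e \<in> path_edges (lift_copies m xs i' j')"
  shows "i = i' \<and> j = j'"
proof -
  let ?c = "copy_label m (length xs - 1)"
  obtain l where l: "Suc l < length xs"
    and el: "e = {(xs ! l, ?c i j l), (xs ! Suc l, ?c i j (Suc l))}"
    using assms(6) by (auto simp: path_edges_lift_copies)
  obtain l' where l': "Suc l' < length xs"
    and el': "e = {(xs ! l', ?c i' j' l'), (xs ! Suc l', ?c i' j' (Suc l'))}"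
    using assms(7) by (auto simp: path_edges_lift_copies)
  have "{xs ! l, xs ! Suc l} = {xs ! l', xs ! Suc l'}"
    using arg_cong[where f = "image fst", OF trans[OF el[symmetric] el']] by simp
  then have "l' = l" using path_edge_index_unique assms(1) l l' by metis
  moreover have "xs ! l \<noteq> xs ! Suc l" using assms(1) l by (simp add: nth_eq_iff_index_eq)
  ultimately have "?c i j l = ?c i' j' l" "?c i j (Suc l) = ?c i' j' (Suc l)"
    using el el' by (auto simp: doubleton_eq_iff)
  moreover have "Suc l \<le> length xs - 1" using l by simp
  ultimately show ?thesis using copy_labels_determine_ends assms(2-5) by blast
qed

lemma is_path_lift_copies:
  assumes "is_path E (line_adj E ends) xs a b" "a \<noteq> b" "i < m" "j < m"
  shows "is_path (mult_edges m E) (line_adj (mult_edges m E) (mult_ends ends)) (lift_copies m xs i j) (a, i) (b, j)"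
proof -
  have ne: "xs \<noteq> []" and hd: "hd xs = a" and last: "last xs = b" and "distinct xs" and "set xs \<subseteq> E"
    and adj: "\<And>l. Suc l < length xs \<Longrightarrow> line_adj E ends (xs ! l) (xs ! Suc l)"
    using assms(1) by (auto simp: is_path_def)
  have "0 < length xs - 1"
    using ne hd last assms(2) by (cases xs) auto
  moreover have lift_ne: "lift_copies m xs i j \<noteq> []" using ne by (simp add: lift_copies_def)
  ultimately have "hd (lift_copies m xs i j) = (a, i)" and "last (lift_copies m xs i j) = (b, j)"
    using ne hd last by (simp_all add: hd_conv_nth last_conv_nth nth_lift_copies copy_label_last)
  moreover have "distinct (lift_copies m xs i j)"
    using \<open>distinct xs\<close> by (auto simp: distinct_conv_nth nth_lift_copies)
  moreover have "set (lift_copies m xs i j) \<subseteq> mult_edges m E"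
    using \<open>set xs \<subseteq> E\<close> assms(3,4) by (auto simp: lift_copies_def mult_edges_def copy_label_less)
  moreover have "line_adj (mult_edges m E) (mult_ends ends) (lift_copies m xs i j ! l) (lift_copies m xs i j ! Suc l)"
    if "Suc l < length xs" for l
    using adj[OF that] that assms(3,4)
    by (auto simp: nth_lift_copies line_adj_def mult_edges_def mult_ends_def copy_label_less)
  ultimately show ?thesis using lift_ne by (simp add: is_path_def)
qed

definition blow_up_vertex :: "nat \<Rightarrow> (nat \<Rightarrow> 'e) \<Rightarrow> nat \<Rightarrow> 'e \<times> nat" where
  "blow_up_vertex m \<phi> w = (\<phi> (w div m), w mod m)"

definition blow_up_path ::
    "nat \<Rightarrow> (nat \<Rightarrow> 'e) \<Rightarrow> (nat \<Rightarrow> nat \<Rightarrow> 'e list) \<Rightarrow> nat \<Rightarrow> nat \<Rightarrow> ('e \<times> nat) list" where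
  "blow_up_path m \<phi> P w w' =
     (if w div m = w' div m then [blow_up_vertex m \<phi> w, blow_up_vertex m \<phi> w']
      else lift_copies m (P (w div m) (w' div m)) (w mod m) (w' mod m))"

lemma div_less_of_less_mult: "w < m * t \<Longrightarrow> w div m < (t :: nat)"
  by (simp add: less_mult_imp_div_less mult.commute)

lemma inj_on_blow_up_vertex:
  assumes "inj_on \<phi> {..<t}"
  shows "inj_on (blow_up_vertex m \<phi>) {..<m * t}"
proof (rule inj_onI)
  fix w w' assume "w \<in> {..<m * t}" "w' \<in> {..<m * t}" "blow_up_vertex m \<phi> w = blow_up_vertex m \<phi> w'"
  then have "w div m \<in> {..<t}" "w' div m \<in> {..<t}" "\<phi> (w div m) = \<phi> (w' div m)" "w mod m = w' mod m"
    by (auto simp: blow_up_vertex_def div_less_of_less_mult)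
  then show "w = w'" using assms by (metis div_mult_mod_eq inj_onD)
qed

lemma blow_up_vertex_image:
  "\<phi> ` {..<t} \<subseteq> E \<Longrightarrow> blow_up_vertex m \<phi> ` {..<m * t} \<subseteq> mult_edges m E"
proof
  fix x assume "\<phi> ` {..<t} \<subseteq> E" "x \<in> blow_up_vertex m \<phi> ` {..<m * t}"
  then obtain w where "w < m * t" "x = (\<phi> (w div m), w mod m)" by (auto simp: blow_up_vertex_def)
  moreover have "0 < m" using \<open>w < m * t\<close> by (cases "m = 0") auto
  ultimately show "x \<in> mult_edges m E"
    using \<open>\<phi> ` {..<t} \<subseteq> E\<close> by (auto simp: mult_edges_def div_less_of_less_mult)
qed

lemma is_path_blow_up_path:
  assumes K: "is_K_immersion E (line_adj E ends) t \<phi> P"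
    and ends: "\<And>e. e \<in> E \<Longrightarrow> ends e \<noteq> {}"
    and w: "w < w'" "w' < m * t"
  shows "is_path (mult_edges m E) (line_adj (mult_edges m E) (mult_ends ends))
           (blow_up_path m \<phi> P w w') (blow_up_vertex m \<phi> w) (blow_up_vertex m \<phi> w')"
proof -
  have \<phi>: "inj_on \<phi> {..<t}" "\<phi> ` {..<t} \<subseteq> E"
    and P: "\<And>u v. u < v \<Longrightarrow> v < t \<Longrightarrow> is_path E (line_adj E ends) (P u v) (\<phi> u) (\<phi> v)"
    using K by (auto simp: is_K_immersion_def)
  have "0 < m" using w by (cases "m = 0") auto
  then have less: "w div m < t" "w' div m < t" "w mod m < m" "w' mod m < m"
    using w div_less_of_less_mult by auto
  show ?thesis
  proof (cases "w div m = w' div m")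
    case True
    have ne: "blow_up_vertex m \<phi> w \<noteq> blow_up_vertex m \<phi> w'"
      using inj_on_blow_up_vertex[OF \<phi>(1), where m = m] w by (auto dest: inj_onD)
    have in_E: "blow_up_vertex m \<phi> w \<in> mult_edges m E" "blow_up_vertex m \<phi> w' \<in> mult_edges m E"
      using blow_up_vertex_image[OF \<phi>(2), where m = m] w by auto
    have "ends (\<phi> (w div m)) \<noteq> {}"
      using ends \<phi>(2) less by auto
    then have "line_adj (mult_edges m E) (mult_ends ends) (blow_up_vertex m \<phi> w) (blow_up_vertex m \<phi> w')"
      using True ne in_E by (simp add: line_adj_def mult_ends_def blow_up_vertex_def)
    then show ?thesis
      using True ne in_E by (simp add: blow_up_path_def is_path_pair)
  next
    case False
    then have "w div m < w' div m" using w div_le_mono[of w w' m] by simp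
    moreover have "\<phi> (w div m) \<noteq> \<phi> (w' div m)" using False \<phi>(1) less by (auto dest: inj_onD)
    ultimately show ?thesis
      using False less by (simp add: blow_up_path_def blow_up_vertex_def is_path_lift_copies P)
  qed
qed

lemma block_edge_blow_up_path:
  assumes "e \<in> path_edges (blow_up_path m \<phi> P w w')" "w div m = w' div m"
  shows "e = {blow_up_vertex m \<phi> w, blow_up_vertex m \<phi> w'}" "card (fst ` e) = 1"
  using assms by (simp_all add: blow_up_path_def blow_up_vertex_def)

lemma lifted_edge_blow_up_path:
  assumes "is_K_immersion V Adj t \<phi> P"
    and "e \<in> path_edges (blow_up_path m \<phi> P w w')" "w div m \<noteq> w' div m" "w < w'" "w' < m * t"
  shows "w div m < w' div m" "distinct (P (w div m) (w' div m))"
    and "e \<in> path_edges (lift_copies m (P (w div m) (w' div m)) (w mod m) (w' mod m))"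
    and "fst ` e \<in> path_edges (P (w div m) (w' div m))"
proof -
  show "w div m < w' div m" using assms(3,4) div_le_mono[of w w' m] by simp
  then show "distinct (P (w div m) (w' div m))"
    using assms(1) div_less_of_less_mult[OF assms(5)] by (simp add: is_K_immersion_def is_path_def)
  show e: "e \<in> path_edges (lift_copies m (P (w div m) (w' div m)) (w mod m) (w' mod m))"
    using assms(2,3) by (simp add: blow_up_path_def)
  show "fst ` e \<in> path_edges (P (w div m) (w' div m))"
    using fst_lift_copies_edge[OF e] .
qed

lemma blow_up_paths_edge_disjoint:
  assumes K: "is_K_immersion V Adj t \<phi> P"
    and w: "w1 < w1'" "w1' < m * t" "w2 < w2'" "w2' < m * t" "(w1, w1') \<noteq> (w2, w2')"
  shows "path_edges (blow_up_path m \<phi> P w1 w1') \<inter> path_edges (blow_up_path m \<phi> P w2 w2') = {}"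
proof (rule ccontr)
  assume "path_edges (blow_up_path m \<phi> P w1 w1') \<inter> path_edges (blow_up_path m \<phi> P w2 w2') \<noteq> {}"
  then obtain e where e1: "e \<in> path_edges (blow_up_path m \<phi> P w1 w1')"
    and e2: "e \<in> path_edges (blow_up_path m \<phi> P w2 w2')" by blast
  show False
  proof (cases "w1 div m = w1' div m"; cases "w2 div m = w2' div m")
    assume "w1 div m = w1' div m" "w2 div m = w2' div m"
    then have "blow_up_vertex m \<phi> ` {w1, w1'} = blow_up_vertex m \<phi> ` {w2, w2'}"
      using block_edge_blow_up_path(1)[OF e1] block_edge_blow_up_path(1)[OF e2] by simp
    moreover have "inj_on (blow_up_vertex m \<phi>) {..<m * t}"
      using K inj_on_blow_up_vertex by (auto simp: is_K_immersion_def)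
    ultimately have "{w1, w1'} = {w2, w2'}"
      using w inj_on_image_eq_iff[of "blow_up_vertex m \<phi>" "{..<m * t}" "{w1, w1'}" "{w2, w2'}"] by auto
    then show False using w by (auto simp: doubleton_eq_iff)
  next
    assume "w1 div m = w1' div m" "w2 div m \<noteq> w2' div m"
    note lift2 = lifted_edge_blow_up_path[OF K e2 this(2) w(3,4)]
    have "card (fst ` e) = 2" by (rule card_path_edge[OF lift2(2,4)])
    then show False using block_edge_blow_up_path(2)[OF e1 \<open>w1 div m = w1' div m\<close>] by simp
  next
    assume "w1 div m \<noteq> w1' div m" "w2 div m = w2' div m"
    note lift1 = lifted_edge_blow_up_path[OF K e1 this(1) w(1,2)]
    have "card (fst ` e) = 2" by (rule card_path_edge[OF lift1(2,4)])
    then show False using block_edge_blow_up_path(2)[OF e2 \<open>w2 div m = w2' div m\<close>] by simp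
  next
    assume "w1 div m \<noteq> w1' div m" "w2 div m \<noteq> w2' div m"
    note lift1 = lifted_edge_blow_up_path[OF K e1 this(1) w(1,2)]
      and lift2 = lifted_edge_blow_up_path[OF K e2 this(2) w(3,4)]
    have same_blocks: "w1 div m = w2 div m \<and> w1' div m = w2' div m"
    proof (rule ccontr)
      assume "\<not> (w1 div m = w2 div m \<and> w1' div m = w2' div m)"
      then have "path_edges (P (w1 div m) (w1' div m)) \<inter> path_edges (P (w2 div m) (w2' div m)) = {}"
        using K lift1(1) lift2(1) div_less_of_less_mult[OF w(2)] div_less_of_less_mult[OF w(4)]
        by (simp add: is_K_immersion_def)
      then show False using lift1(4) lift2(4) by blast
    qed
    have "0 < m" using w by (cases "m = 0") auto
    moreover have "e \<in> path_edges (lift_copies m (P (w1 div m) (w1' div m)) (w2 mod m) (w2' mod m))"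
      using lift2(3) same_blocks by simp
    ultimately have "w1 mod m = w2 mod m \<and> w1' mod m = w2' mod m"
      by (intro lift_copies_edge_determines_ends[OF lift1(2) _ _ _ _ lift1(3)]) simp_all
    then show False
      using same_blocks w(5) by (metis div_mult_mod_eq)
  qed
qed

lemma is_K_immersion_blow_up:
  assumes "is_K_immersion E (line_adj E ends) t \<phi> P" "\<And>e. e \<in> E \<Longrightarrow> ends e \<noteq> {}"
  shows "is_K_immersion (mult_edges m E) (line_adj (mult_edges m E) (mult_ends ends)) (m * t)
           (blow_up_vertex m \<phi>) (blow_up_path m \<phi> P)"
proof -
  have "inj_on \<phi> {..<t}" "\<phi> ` {..<t} \<subseteq> E" using assms(1) by (simp_all add: is_K_immersion_def)
  then show ?thesis
    unfolding is_K_immersion_def[of "mult_edges m E"]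
    using is_path_blow_up_path[OF assms] blow_up_paths_edge_disjoint[OF assms(1)]
    by (simp add: inj_on_blow_up_vertex blow_up_vertex_image)
qed

theorem theorem1p2:
  fixes V :: "'v set" and E :: "'e set" and ends :: "'e \<Rightarrow> 'v set" and t m :: nat
  assumes "multigraph V E ends"
    and "has_K_immersion E (line_adj E ends) t"
    and "m \<ge> 2"
  shows "has_K_immersion (mult_edges m E) (line_adj (mult_edges m E) (mult_ends ends)) (m * t)"
  \<comment> \<open>The construction works for every \<open>m\<close>.\<close>
proof -
  obtain \<phi> P where "is_K_immersion E (line_adj E ends) t \<phi> P"
    using assms(2) by (auto simp: has_K_immersion_iff)
  moreover have "\<And>e. e \<in> E \<Longrightarrow> ends e \<noteq> {}"
    using assms(1) by (fastforce simp: multigraph_def)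
  ultimately show ?thesis
    using is_K_immersion_blow_up has_K_immersion_iff by blast
qed

end
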